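(* Let $G$ be a complete edge-colored graph with vertex set $V$, and for every strong module $M$ of $G$ let $\ell^M$ be a labeling of the quotient graph $G[M]/\mathbb{P}_{\max}(M)$. Define the relation $\prec$ on $V$ by: for distinct $u,v\in V$, $u\prec v$ iff $\ell^{M^{u,v}}(M^{u,v}_u)<\ell^{M^{u,v}}(M^{u,v}_v)$. Then $\prec$ is a strict total order on $V$, and consequently the map $\ell_\prec:V\to\{1,\dots,|V|\}$ with $\ell_\prec(u)<\ell_\prec(v)\iff u\prec v$ is a labeling of $G$.
   Context: A complete edge-colored graph is a complete graph on a finite set $V$ with edges partitioned into nonempty color classes. A module is a set $M\subseteq V$ such that for every $v\notin M$ all edges $\{u,v\}$, $u\in M$, have the same color; a strong module is a nonempty module that is comparable by inclusion or disjoint with every other module. The strong modules form a hierarchy (tree) containing $V$ and all singletons. For a strong module $M$ with $|M|\ge2$, $\mathbb{P}_{\max}(M)$ is the set of inclusion-maximal strong modules properly contained in $M$ (a partition of $M$), and $G[M]/\mathbb{P}_{\max}(M)$ is the complete graph on $\mathbb{P}_{\max}(M)$ in which $\{M_a,M_b\}$ has the common color of all edges between $M_a$ and $M_b$; for $|M|=1$ it is the one-vertex graph. A labeling of a graph with vertex set $W$ is a bijection $W\to\{1,\dots,|W|\}$. For distinct $u,v\in V$, $M^{u,v}$ is the inclusion-minimal strong module containing $u$ and $v$, and $M^{u,v}_u,M^{u,v}_v\in\mathbb{P}_{\max}(M^{u,v})$ are the (distinct) members containing $u$ and $v$, respectively. A strict total order is an irreflexive, transitive relation in which any two distinct elements are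 comparable. *)

theory Defs
  imports Main
begin

text \<open>A complete edge-colored graph on the finite vertex set V is given by a
  symmetric colouring function col (only its values on distinct pairs of V matter;
  the colour classes are the nonempty fibres of col).\<close>

definition ce_graph :: "'a set \<Rightarrow> ('a \<Rightarrow> 'a \<Rightarrow> 'c) \<Rightarrow> bool" where
  "ce_graph V col \<longleftrightarrow> finite V \<and> (\<forall>u\<in>V. \<forall>v\<in>V. u \<noteq> v \<longrightarrow> col u v = col v u)"

definition is_module :: "'a set \<Rightarrow> ('a \<Rightarrow> 'a \<Rightarrow> 'c) \<Rightarrow> 'a set \<Rightarrow> bool" where
  "is_module V col M \<longleftrightarrow> M \<subseteq> V \<and>
     (\<forall>v\<in>V - M. \<forall>u\<in>M. \<forall>u'\<in>M. col u v = col u' v)"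

definition strong_module :: "'a set \<Rightarrow> ('a \<Rightarrow> 'a \<Rightarrow> 'c) \<Rightarrow> 'a set \<Rightarrow> bool" where
  "strong_module V col M \<longleftrightarrow> M \<noteq> {} \<and> is_module V col M \<and>
     (\<forall>M'. is_module V col M' \<longrightarrow> M \<subseteq> M' \<or> M' \<subseteq> M \<or> M \<inter> M' = {})"

definition Pmax :: "'a set \<Rightarrow> ('a \<Rightarrow> 'a \<Rightarrow> 'c) \<Rightarrow> 'a set \<Rightarrow> 'a set set" where
  "Pmax V col M = {M'. strong_module V col M' \<and> M' \<subset> M \<and>
     (\<forall>M''. strong_module V col M'' \<and> M'' \<subset> M \<and> M' \<subseteq> M'' \<longrightarrow> M'' = M')}"

text \<open>Vertex set of the quotient graph G[M]/Pmax(M) (one vertex if |M| = 1).\<close>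
definition quot_vertices :: "'a set \<Rightarrow> ('a \<Rightarrow> 'a \<Rightarrow> 'c) \<Rightarrow> 'a set \<Rightarrow> 'a set set" where
  "quot_vertices V col M = (if card M = 1 then {M} else Pmax V col M)"

definition is_labeling :: "('b \<Rightarrow> nat) \<Rightarrow> 'b set \<Rightarrow> bool" where
  "is_labeling f W \<longleftrightarrow> bij_betw f W {1..card W}"

definition Muv :: "'a set \<Rightarrow> ('a \<Rightarrow> 'a \<Rightarrow> 'c) \<Rightarrow> 'a \<Rightarrow> 'a \<Rightarrow> 'a set" where
  "Muv V col u v = (THE M. strong_module V col M \<and> u \<in> M \<and> v \<in> M \<and>
     (\<forall>M'. strong_module V col M' \<and> u \<in> M' \<and> v \<in> M' \<longrightarrow> M \<subseteq> M'))"

definition Muv_part :: "'a set \<Rightarrow> ('a \<Rightarrow> 'a \<Rightarrow> 'c) \<Rightarrow> 'a \<Rightarrow> 'a \<Rightarrow> 'a \<Rightarrow> 'a set" where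
  "Muv_part V col u v x = (THE X. X \<in> Pmax V col (Muv V col u v) \<and> x \<in> X)"

definition induced_rel :: "'a set \<Rightarrow> ('a \<Rightarrow> 'a \<Rightarrow> 'c) \<Rightarrow> ('a set \<Rightarrow> 'a set \<Rightarrow> nat) \<Rightarrow> 'a rel" where
  "induced_rel V col lab = {(u, v). u \<in> V \<and> v \<in> V \<and> u \<noteq> v \<and>
     lab (Muv V col u v) (Muv_part V col u v u) < lab (Muv V col u v) (Muv_part V col u v v)}"

end

theory Submission
  imports Defs
begin

text \<open>Strong modules containing a common vertex are nested. Suppose \<open>u \<prec> v\<close> is decided in
  M^{u,v} and \<open>v \<prec> w\<close> in M^{v,w}; both contain v, so they are nested. If M^{u,v} \<subset> M^{v,w},
  the strong module M^{u,v} lies inside one block of P_max(M^{v,w}), so u and v share that block.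
  Hence u and w lie in different blocks of M^{v,w}, which forces M^{u,w} = M^{v,w}, and \<open>u \<prec> w\<close>
  is decided by the same labels as \<open>v \<prec> w\<close>; the case M^{v,w} \<subset> M^{u,v} is symmetric.
  Totality holds because u and v lie in distinct blocks of M^{u,v}, which receive distinct labels.
  Ranking each vertex by its number of predecessors turns the finite strict total order into a
  labeling.\<close>

lemma strong_module_singleton: "x \<in> V \<Longrightarrow> strong_module V col {x}"
  unfolding strong_module_def is_module_def by auto

lemma strong_module_vertex_set: "V \<noteq> {} \<Longrightarrow> strong_module V col V"
  unfolding strong_module_def is_module_def by auto

lemma strong_module_subset: "strong_module V col M \<Longrightarrow> M \<subseteq> V"
  unfolding strong_module_def is_module_def by auto

lemma strong_modules_nested:
  "strong_module V col A \<Longrightarrow> strong_module V col B \<Longrightarrow> x \<in> A \<Longrightarrow> x \<in> B \<Longrightarrow> A \<subseteq> B \<or> B \<subseteq> A"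
  unfolding strong_module_def by blast

lemma PmaxD:
  assumes "X \<in> Pmax V col M"
  shows "strong_module V col X" "X \<subset> M"
  using assms unfolding Pmax_def by auto

lemma Pmax_maximal:
  "X \<in> Pmax V col M \<Longrightarrow> strong_module V col Z \<Longrightarrow> Z \<subset> M \<Longrightarrow> X \<subseteq> Z \<Longrightarrow> Z = X"
  unfolding Pmax_def by blast

lemma Pmax_disjoint:
  assumes "X \<in> Pmax V col M" "Y \<in> Pmax V col M" "x \<in> X" "x \<in> Y"
  shows "X = Y"
proof -
  have "X \<subseteq> Y \<or> Y \<subseteq> X"
    using strong_modules_nested[OF PmaxD(1) PmaxD(1) assms(3,4)] assms(1,2) .
  then show ?thesis
    using Pmax_maximal PmaxD assms(1,2) by metis
qed

lemma ex_least_strong_module: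
  assumes "finite V" "S \<subseteq> V" "S \<noteq> {}"
  shows "\<exists>M. strong_module V col M \<and> S \<subseteq> M \<and>
    (\<forall>M'. strong_module V col M' \<and> S \<subseteq> M' \<longrightarrow> M \<subseteq> M')"
proof -
  let ?A = "{M. strong_module V col M \<and> S \<subseteq> M}"
  have "?A \<subseteq> Pow V"
    using strong_module_subset by blast
  then have "finite ?A"
    using assms(1) by (simp add: finite_subset)
  moreover have "V \<in> ?A"
    using assms strong_module_vertex_set[of V col] by auto
  ultimately obtain M where M: "M \<in> ?A" and minimal: "\<forall>M'\<in>?A. M' \<subseteq> M \<longrightarrow> M = M'"
    using finite_has_minimal[of ?A] by blast
  obtain s where "s \<in> S"
    using assms(3) by blast
  have "M \<subseteq> M'" if "M' \<in> ?A" for M'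
  proof -
    have "M \<subseteq> M' \<or> M' \<subseteq> M"
      using strong_modules_nested[of V col M M' s] M that \<open>s \<in> S\<close> by blast
    then show ?thesis
      using minimal that by blast
  qed
  with M show ?thesis
    by blast
qed

lemma Pmax_cover:
  assumes "finite V" "strong_module V col N" "N \<subset> M"
  shows "\<exists>X\<in>Pmax V col M. N \<subseteq> X"
proof -
  let ?A = "{N'. strong_module V col N' \<and> N \<subseteq> N' \<and> N' \<subset> M}"
  have "?A \<subseteq> Pow V"
    using strong_module_subset by blast
  then have "finite ?A"
    using assms(1) by (simp add: finite_subset)
  moreover have "N \<in> ?A"
    using assms(2,3) by simp
  ultimately obtain X where X: "X \<in> ?A" and maximal: "\<forall>Y\<in>?A. X \<subseteq> Y \<longrightarrow> X = Y"
    using finite_has_maximal2[of ?A N] by auto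
  have "X \<in> Pmax V col M"
    unfolding Pmax_def using X maximal by auto
  with X show ?thesis
    by auto
qed

definition Pmax_block :: "'a set \<Rightarrow> ('a \<Rightarrow> 'a \<Rightarrow> 'c) \<Rightarrow> 'a set \<Rightarrow> 'a \<Rightarrow> 'a set" where
  "Pmax_block V col M x = (THE X. X \<in> Pmax V col M \<and> x \<in> X)"

lemma Muv_part_eq_Pmax_block: "Muv_part V col u v x = Pmax_block V col (Muv V col u v) x"
  unfolding Muv_part_def Pmax_block_def ..

lemma Muv_sym: "Muv V col u v = Muv V col v u"
  unfolding Muv_def by (rule arg_cong[where f = The]) blast

lemma Pmax_block_eqI: "X \<in> Pmax V col M \<Longrightarrow> x \<in> X \<Longrightarrow> Pmax_block V col M x = X"
  unfolding Pmax_block_def by (rule the_equality) (auto dest: Pmax_disjoint)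

context
  fixes V :: "'a set" and col :: "'a \<Rightarrow> 'a \<Rightarrow> 'c"
  assumes finite_vertices: "finite V"
begin

lemma Pmax_block_cover:
  assumes "strong_module V col N" "N \<subset> M" "x \<in> N"
  shows "Pmax_block V col M x \<in> Pmax V col M" "N \<subseteq> Pmax_block V col M x"
proof -
  obtain X where X: "X \<in> Pmax V col M" "N \<subseteq> X"
    using Pmax_cover[OF finite_vertices assms(1,2)] by blast
  with assms(3) have "Pmax_block V col M x = X"
    by (intro Pmax_block_eqI) auto
  with X show "Pmax_block V col M x \<in> Pmax V col M" "N \<subseteq> Pmax_block V col M x"
    by simp_all
qed

lemma Pmax_block_mem:
  assumes "x \<in> V" "x \<in> M" "M \<noteq> {x}"
  shows "Pmax_block V col M x \<in> Pmax V col M" "x \<in> Pmax_block V col M x"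
  using Pmax_block_cover[OF strong_module_singleton[OF assms(1)], of M x] assms(2,3) by auto

lemma Pmax_block_eq:
  assumes "strong_module V col N" "N \<subset> M" "x \<in> N" "y \<in> N"
  shows "Pmax_block V col M y = Pmax_block V col M x"
  using Pmax_block_cover[OF assms(1-3)] assms(4) by (metis Pmax_block_eqI subsetD)

lemma Muv:
  assumes "u \<in> V" "v \<in> V"
  shows "strong_module V col (Muv V col u v)" "u \<in> Muv V col u v" "v \<in> Muv V col u v"
    "\<And>M. strong_module V col M \<Longrightarrow> u \<in> M \<Longrightarrow> v \<in> M \<Longrightarrow> Muv V col u v \<subseteq> M"
proof -
  let ?least = "\<lambda>M. strong_module V col M \<and> u \<in> M \<and> v \<in> M \<and>
    (\<forall>M'. strong_module V col M' \<and> u \<in> M' \<and> v \<in> M' \<longrightarrow> M \<subseteq> M')"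
  have "\<exists>M. ?least M"
    using ex_least_strong_module[OF finite_vertices, of "{u, v}" col] assms by simp
  then have "\<exists>!M. ?least M"
    by (metis subset_antisym)
  then have "?least (Muv V col u v)"
    unfolding Muv_def by (rule theI')
  then show "strong_module V col (Muv V col u v)" "u \<in> Muv V col u v" "v \<in> Muv V col u v"
    "\<And>M. strong_module V col M \<Longrightarrow> u \<in> M \<Longrightarrow> v \<in> M \<Longrightarrow> Muv V col u v \<subseteq> M"
    by simp_all
qed

lemma Muv_blocks_distinct:
  assumes "u \<in> V" "v \<in> V" "u \<noteq> v"
  shows "Pmax_block V col (Muv V col u v) u \<noteq> Pmax_block V col (Muv V col u v) v"
proof
  let ?M = "Muv V col u v"
  let ?X = "Pmax_block V col ?M u"
  assume same_block: "?X = Pmax_block V col ?M v"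
  have "?M \<noteq> {u}" "?M \<noteq> {v}"
    using Muv(2,3)[OF assms(1,2)] assms(3) by auto
  then have X: "?X \<in> Pmax V col ?M" "u \<in> ?X" "v \<in> ?X"
    using Pmax_block_mem[OF assms(1) Muv(2)[OF assms(1,2)]]
      Pmax_block_mem[OF assms(2) Muv(3)[OF assms(1,2)]] same_block by auto
  then have "?M \<subseteq> ?X"
    using PmaxD(1) Muv(4)[OF assms(1,2)] by blast
  with PmaxD(2)[OF X(1)] show False
    by blast
qed

lemma Muv_eqI:
  assumes "strong_module V col M" "u \<in> M" "w \<in> M"
    and "Pmax_block V col M u \<noteq> Pmax_block V col M w"
  shows "Muv V col u w = M"
proof (rule ccontr)
  assume "Muv V col u w \<noteq> M"
  moreover have uw: "u \<in> V" "w \<in> V"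
    using assms(1-3) strong_module_subset by blast+
  ultimately have "Muv V col u w \<subset> M"
    using Muv(4)[OF uw assms(1-3)] by blast
  then have "Pmax_block V col M w = Pmax_block V col M u"
    using Pmax_block_eq Muv(1-3)[OF uw] by blast
  with assms(4) show False
    by simp
qed

lemma quot_vertices_Muv:
  assumes "u \<in> V" "v \<in> V" "u \<noteq> v"
  shows "quot_vertices V col (Muv V col u v) = Pmax V col (Muv V col u v)"
proof -
  have "card (Muv V col u v) \<noteq> 1"
    using Muv(2,3)[OF assms(1,2)] assms(3) by (auto simp: card_1_singleton_iff)
  then show ?thesis
    unfolding quot_vertices_def by simp
qed

lemma induced_rel_iff:
  "(u, v) \<in> induced_rel V col lab \<longleftrightarrow> u \<in> V \<and> v \<in> V \<and> u \<noteq> v \<and>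
    lab (Muv V col u v) (Pmax_block V col (Muv V col u v) u)
      < lab (Muv V col u v) (Pmax_block V col (Muv V col u v) v)"
  unfolding induced_rel_def Muv_part_eq_Pmax_block by simp

lemma induced_relI:
  assumes "strong_module V col M" "u \<in> M" "w \<in> M"
    and "lab M (Pmax_block V col M u) < lab M (Pmax_block V col M w)"
  shows "(u, w) \<in> induced_rel V col lab"
proof -
  have "Pmax_block V col M u \<noteq> Pmax_block V col M w"
    using assms(4) by auto
  then have "Muv V col u w = M"
    using Muv_eqI assms(1-3) by blast
  moreover have "u \<noteq> w"
    using assms(4) by auto
  ultimately show ?thesis
    using assms strong_module_subset unfolding induced_rel_iff by auto
qed

lemma trans_induced_rel: "trans (induced_rel V col lab)"
proof (rule transI)
  fix u v w
  assume uv: "(u, v) \<in> induced_rel V col lab" and vw: "(v, w) \<in> induced_rel V col lab"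
  let ?M\<^sub>1 = "Muv V col u v" and ?M\<^sub>2 = "Muv V col v w"
  have V: "u \<in> V" "v \<in> V" "w \<in> V"
    and less\<^sub>1: "lab ?M\<^sub>1 (Pmax_block V col ?M\<^sub>1 u) < lab ?M\<^sub>1 (Pmax_block V col ?M\<^sub>1 v)"
    and less\<^sub>2: "lab ?M\<^sub>2 (Pmax_block V col ?M\<^sub>2 v) < lab ?M\<^sub>2 (Pmax_block V col ?M\<^sub>2 w)"
    using uv vw unfolding induced_rel_iff by auto
  note M\<^sub>1 = Muv(1-3)[OF V(1,2)] and M\<^sub>2 = Muv(1-3)[OF V(2,3)]
  have "?M\<^sub>1 \<subseteq> ?M\<^sub>2 \<or> ?M\<^sub>2 \<subseteq> ?M\<^sub>1"
    by (rule strong_modules_nested[OF M\<^sub>1(1) M\<^sub>2(1) M\<^sub>1(3) M\<^sub>2(2)])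
  then consider "?M\<^sub>1 = ?M\<^sub>2" | "?M\<^sub>1 \<subset> ?M\<^sub>2" | "?M\<^sub>2 \<subset> ?M\<^sub>1"
    by auto
  then show "(u, w) \<in> induced_rel V col lab"
  proof cases
    case 1
    with M\<^sub>1(2) less\<^sub>1 less\<^sub>2 show ?thesis
      by (intro induced_relI[OF M\<^sub>2(1) _ M\<^sub>2(3)]) auto
  next
    case 2
    then have "Pmax_block V col ?M\<^sub>2 u = Pmax_block V col ?M\<^sub>2 v"
      by (rule Pmax_block_eq[OF M\<^sub>1(1) _ M\<^sub>1(3,2)])
    with 2 M\<^sub>1(2) less\<^sub>2 show ?thesis
      by (intro induced_relI[OF M\<^sub>2(1) _ M\<^sub>2(3)]) auto
  next
    case 3
    then have "Pmax_block V col ?M\<^sub>1 w = Pmax_block V col ?M\<^sub>1 v"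
      by (rule Pmax_block_eq[OF M\<^sub>2(1) _ M\<^sub>2(2,3)])
    with 3 M\<^sub>2(3) less\<^sub>1 show ?thesis
      by (intro induced_relI[OF M\<^sub>1(1) M\<^sub>1(2)]) auto
  qed
qed

lemma total_on_induced_rel:
  assumes "\<And>M. strong_module V col M \<Longrightarrow> inj_on (lab M) (quot_vertices V col M)"
  shows "total_on V (induced_rel V col lab)"
proof (rule total_onI)
  fix u v
  assume uv: "u \<in> V" "v \<in> V" "u \<noteq> v"
  let ?M = "Muv V col u v"
  have "inj_on (lab ?M) (Pmax V col ?M)"
    using assms[OF Muv(1)[OF uv(1,2)]] quot_vertices_Muv[OF uv] by simp
  moreover have "?M \<noteq> {u}" "?M \<noteq> {v}"
    using Muv(2,3)[OF uv(1,2)] uv(3) by auto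
  ultimately have "lab ?M (Pmax_block V col ?M u) \<noteq> lab ?M (Pmax_block V col ?M v)"
    using Muv_blocks_distinct[OF uv] Pmax_block_mem(1) Muv(2,3)[OF uv(1,2)] uv(1,2)
    by (metis inj_onD)
  then show "(u, v) \<in> induced_rel V col lab \<or> (v, u) \<in> induced_rel V col lab"
    using uv Muv_sym[of V col u v] unfolding induced_rel_iff by auto
qed

end

definition order_rank :: "'a set \<Rightarrow> 'a rel \<Rightarrow> 'a \<Rightarrow> nat" where
  "order_rank V R u = Suc (card {w \<in> V. (w, u) \<in> R})"

lemma order_rank_less:
  assumes "finite V" "trans R" "irrefl R" "u \<in> V" "(u, v) \<in> R"
  shows "order_rank V R u < order_rank V R v"
proof -
  have "{w \<in> V. (w, u) \<in> R} \<subset> {w \<in> V. (w, v) \<in> R}"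
    using assms(2-5) unfolding trans_def irrefl_def by blast
  then show ?thesis
    unfolding order_rank_def using assms(1) by (simp add: psubset_card_mono)
qed

lemma order_rank_less_iff:
  assumes "finite V" "strict_linear_order_on V R" "u \<in> V" "v \<in> V"
  shows "order_rank V R u < order_rank V R v \<longleftrightarrow> (u, v) \<in> R"
proof
  have R: "trans R" "irrefl R" "total_on V R"
    using assms(2) unfolding strict_linear_order_on_def by auto
  assume less: "order_rank V R u < order_rank V R v"
  show "(u, v) \<in> R"
  proof (rule ccontr)
    assume "(u, v) \<notin> R"
    moreover have "u \<noteq> v"
      using less by auto
    ultimately have "(v, u) \<in> R"
      using R(3) assms(3,4) unfolding total_on_def by blast
    then have "order_rank V R v < order_rank V R u"
      by (rule order_rank_less[OF assms(1) R(1,2) assms(4)])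
    with less show False
      by simp
  qed
next
  assume "(u, v) \<in> R"
  with assms show "order_rank V R u < order_rank V R v"
    unfolding strict_linear_order_on_def by (intro order_rank_less) auto
qed

lemma order_rank_labeling:
  assumes "finite V" "strict_linear_order_on V R"
  shows "is_labeling (order_rank V R) V"
proof -
  have "inj_on (order_rank V R) V"
  proof (rule inj_onI, rule ccontr)
    fix u v
    assume uv: "u \<in> V" "v \<in> V" "order_rank V R u = order_rank V R v" "u \<noteq> v"
    then have "(u, v) \<in> R \<or> (v, u) \<in> R"
      using assms(2) unfolding strict_linear_order_on_def total_on_def by blast
    with uv show False
      using order_rank_less_iff[OF assms] by fastforce
  qed
  moreover have "order_rank V R ` V \<subseteq> {1..card V}"
  proof (rule image_subsetI)
    fix u
    assume u: "u \<in> V"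
    have "{w \<in> V. (w, u) \<in> R} \<subseteq> V - {u}"
      using assms(2) unfolding strict_linear_order_on_def irrefl_def by blast
    then have "card {w \<in> V. (w, u) \<in> R} \<le> card (V - {u})"
      using assms(1) by (intro card_mono) simp_all
    also have "\<dots> < card V"
      using assms(1) u by (rule card_Diff1_less)
    finally have "card {w \<in> V. (w, u) \<in> R} < card V" .
    then show "order_rank V R u \<in> {1..card V}"
      unfolding order_rank_def by simp
  qed
  moreover from calculation have "card (order_rank V R ` V) = card {1..card V}"
    by (simp add: card_image)
  ultimately have "order_rank V R ` V = {1..card V}"
    using card_subset_eq[OF finite_atLeastAtMost] by blast
  with \<open>inj_on (order_rank V R) V\<close> show ?thesis
    unfolding is_labeling_def bij_betw_def by simp
qed

theorem lemma4p6:
  fixes V :: "'a set" and col :: "'a \<Rightarrow> 'a \<Rightarrow> 'c"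
    and lab :: "'a set \<Rightarrow> 'a set \<Rightarrow> nat"
  assumes "ce_graph V col"
    and "\<And>M. strong_module V col M \<Longrightarrow> is_labeling (lab M) (quot_vertices V col M)"
  shows "strict_linear_order_on V (induced_rel V col lab)
    \<and> (\<exists>f. is_labeling f V \<and>
          (\<forall>u\<in>V. \<forall>v\<in>V. f u < f v \<longleftrightarrow> (u, v) \<in> induced_rel V col lab))"
proof -
  have finite: "finite V"
    using assms(1) unfolding ce_graph_def by simp
  have injective: "inj_on (lab M) (quot_vertices V col M)" if "strong_module V col M" for M
    using assms(2)[OF that] unfolding is_labeling_def bij_betw_def by simp
  have "irrefl (induced_rel V col lab)"
    unfolding irrefl_def induced_rel_def by simp
  with finite injective have order: "strict_linear_order_on V (induced_rel V col lab)"
    unfolding strict_linear_order_on_def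
    using trans_induced_rel total_on_induced_rel by blast
  show ?thesis
    using order order_rank_labeling[OF finite order] order_rank_less_iff[OF finite order] by blast
qed

end
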